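(* A circular net $f:\mathbb Z^2\to\mathbb R^N$ (in general position) is a discrete isothermic net if and only if the function $q(u)=q(f,f_1,f_{12},f_2)$ satisfies, for every $u\in\mathbb Z^2$, $$q\cdot q_{-1,-2}=q_{-1}\cdot q_{-2},$$ where $q_{-1}=q(u-e_1)=q(f_{-1},f,f_2,f_{-1,2})$, $q_{-2}=q(u-e_2)=q(f_{-2},f_{1,-2},f_1,f)$, and $q_{-1,-2}=q(u-e_1-e_2)=q(f_{-1,-2},f_{-2},f,f_{-1})$.
   Context: Notation: for $f:\mathbb Z^m\to\mathbb R^N$, $f=f(u)$, $f_i=f(u+e_i)$, $f_{ij}=f(u+e_i+e_j)$ with $e_i$ the unit vectors; negative indices denote backward shifts, e.g. $f_{-1}=f(u-e_1)$, $f_{1,-2}=f(u+e_1-e_2)$. A Q-net is a map such that each elementary quadrilateral $(f,f_i,f_{ij},f_j)$ ($i\ne j$) is planar, assumed non-degenerate (distinct vertices, no three collinear, diagonals meeting in a point distinct from the vertices). Two planar quadrilaterals $(A,B,C,D)$, $(A^*,B^*,C^*,D^* )$ are dual if $A^*B^*\parallel AB$, $B^*C^*\parallel BC$, $C^*D^*\parallel CD$, $D^*A^*\parallel DA$, $A^*C^*\parallel BD$, $B^*D^*\parallel AC$. A Q-net $f$ is a discrete Koenigs net if there is a Q-net $f^*$ with every $(f^*,f^*_i,f^*_{ij},f^*_j)$ dual to $(f,f_i,f_{ij},f_j)$. A circular net is a Q-net all of whose elementary quadrilaterals have their four vertices on a circle. A discrete isothermic net is a circular net which is a discrete Koenigs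 net. For four concircular points $a,b,c,d\in\mathbb R^N$, their cross-ratio is $q(a,b,c,d)=(a-b)(b-c)^{-1}(c-d)(d-a)^{-1}$, computed after identifying a $2$-plane containing them with $\mathbb C$ (complex multiplication); it is real and independent of the identification (equivalently, computed in the Clifford algebra of $\mathbb R^N$). *)

theory Defs
  imports "HOL-Analysis.Analysis"
begin

type_synonym 'a net2 = "int \<times> int \<Rightarrow> 'a"

definition sh :: "int \<Rightarrow> int \<Rightarrow> int \<times> int \<Rightarrow> int \<times> int" where
  "sh a b u = (fst u + a, snd u + b)"

definition nondeg_planar_quad :: "'a::euclidean_space \<Rightarrow> 'a \<Rightarrow> 'a \<Rightarrow> 'a \<Rightarrow> bool" where
  "nondeg_planar_quad A B C D \<longleftrightarrow>
     aff_dim {A, B, C, D} \<le> 2 \<and>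
     distinct [A, B, C, D] \<and>
     \<not> collinear {A, B, C} \<and> \<not> collinear {A, B, D} \<and>
     \<not> collinear {A, C, D} \<and> \<not> collinear {B, C, D} \<and>
     (\<exists>X. X \<in> affine hull {A, C} \<and> X \<in> affine hull {B, D} \<and> X \<notin> {A, B, C, D})"

definition Q_net :: "('a::euclidean_space) net2 \<Rightarrow> bool" where
  "Q_net f \<longleftrightarrow> (\<forall>u. nondeg_planar_quad (f u) (f (sh 1 0 u)) (f (sh 1 1 u)) (f (sh 0 1 u)))"

definition parallel :: "'a::real_vector \<Rightarrow> 'a \<Rightarrow> bool" where
  "parallel x y \<longleftrightarrow> (\<exists>c::real. x = c *\<^sub>R y)"

definition dual_quads :: "'a::euclidean_space \<Rightarrow> 'a \<Rightarrow> 'a \<Rightarrow> 'a \<Rightarrow> 'a \<Rightarrow> 'a \<Rightarrow> 'a \<Rightarrow> 'a \<Rightarrow> bool" where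
  "dual_quads A B C D A' B' C' D' \<longleftrightarrow>
     parallel (B' - A') (B - A) \<and> parallel (C' - B') (C - B) \<and>
     parallel (D' - C') (D - C) \<and> parallel (A' - D') (A - D) \<and>
     parallel (C' - A') (D - B) \<and> parallel (D' - B') (C - A)"

definition Koenigs_net :: "('a::euclidean_space) net2 \<Rightarrow> bool" where
  "Koenigs_net f \<longleftrightarrow> Q_net f \<and>
     (\<exists>g::'a net2. Q_net g \<and>
        (\<forall>u. dual_quads (f u) (f (sh 1 0 u)) (f (sh 1 1 u)) (f (sh 0 1 u))
                        (g u) (g (sh 1 0 u)) (g (sh 1 1 u)) (g (sh 0 1 u))))"

definition concircular :: "'a::euclidean_space \<Rightarrow> 'a \<Rightarrow> 'a \<Rightarrow> 'a \<Rightarrow> bool" where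
  "concircular A B C D \<longleftrightarrow> aff_dim {A, B, C, D} \<le> 2 \<and>
     (\<exists>c r. c \<in> affine hull {A, B, C, D} \<and>
        dist A c = r \<and> dist B c = r \<and> dist C c = r \<and> dist D c = r)"

definition circular_net :: "('a::euclidean_space) net2 \<Rightarrow> bool" where
  "circular_net f \<longleftrightarrow> Q_net f \<and>
     (\<forall>u. concircular (f u) (f (sh 1 0 u)) (f (sh 1 1 u)) (f (sh 0 1 u)))"

definition isothermic_net :: "('a::euclidean_space) net2 \<Rightarrow> bool" where
  "isothermic_net f \<longleftrightarrow> circular_net f \<and> Koenigs_net f"

definition plane_emb :: "'a::euclidean_space \<Rightarrow> 'a \<Rightarrow> 'a \<Rightarrow> complex \<Rightarrow> 'a" where
  "plane_emb p u v z = p + Re z *\<^sub>R u + Im z *\<^sub>R v"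

text \<open>Cross-ratio of four concircular points, computed after identifying a 2-plane
  containing them with C.\<close>
definition cross_ratio :: "'a::euclidean_space \<Rightarrow> 'a \<Rightarrow> 'a \<Rightarrow> 'a \<Rightarrow> real" where
  "cross_ratio a b c d = (SOME r::real. \<exists>p u v za zb zc zd.
      norm u = 1 \<and> norm v = 1 \<and> inner u v = 0 \<and>
      plane_emb p u v za = a \<and> plane_emb p u v zb = b \<and>
      plane_emb p u v zc = c \<and> plane_emb p u v zd = d \<and>
      complex_of_real r = (za - zb) * inverse (zb - zc) * (zc - zd) * inverse (zd - za))"

definition qfun :: "('a::euclidean_space) net2 \<Rightarrow> int \<times> int \<Rightarrow> real" where
  "qfun f u = cross_ratio (f u) (f (sh 1 0 u)) (f (sh 1 1 u)) (f (sh 0 1 u))"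

end

theory Submission
  imports Defs
begin

text \<open>
  The proof reduces the theorem to a statement about a single quadrilateral and an
  integrability argument on the lattice.  For a non-degenerate concircular quadrilateral
  \<open>(A, B, C, D)\<close> with real cross-ratio \<open>q\<close>, the quadrilaterals dual to it are
  exactly the Christoffel-type ones: their edges are \<open>\<mu> inv(B - A)\<close>, \<open>(\<mu>/q) inv(C - B)\<close>,
  \<open>\<mu> inv(D - C)\<close>, \<open>(\<mu>/q) inv(A - D)\<close> for a real \<open>\<mu>\<close>, where \<open>inv x = x / |x|^2\<close>.
  This is proved by placing the quadrilateral in an orthonormal frame of its plane and
  computing in \<open>\<complex>\<close>, where it comes down to the identity
  \<open>1/x1 + 1/(q x2) + 1/x3 + 1/(q x4) = 0\<close> for the edges \<open>x_i\<close>.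

  A dual net therefore amounts to a multiplier \<open>\<mu>\<close> on the faces of \<open>\<int>\<^sup>2\<close> that is
  compatible along shared edges: \<open>\<mu>\<close> is constant in the second direction and \<open>\<mu>/q\<close> in
  the first.  Such a \<open>\<mu>\<close> exists iff \<open>q q\<^sub>-\<^sub>1\<^sub>,\<^sub>-\<^sub>2 = q\<^sub>-\<^sub>1 q\<^sub>-\<^sub>2\<close>, and given \<open>\<mu>\<close> the dual
  net is obtained by integrating a closed discrete 1-form on \<open>\<int>\<^sup>2\<close>.
\<close>

definition crs :: "complex \<Rightarrow> complex \<Rightarrow> real" where
  "crs x y = Re x * Im y - Im x * Re y"

lemma crs_scale: "crs (of_real a * x) (of_real b * y) = a * b * crs x y"
  by (simp add: crs_def algebra_simps)
lemma crs_add_left: "crs (x + x') y = crs x y + crs x' y"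
  by (simp add: crs_def algebra_simps)
lemma crs_add_right: "crs x (y + y') = crs x y + crs x y'"
  by (simp add: crs_def algebra_simps)
lemma crs_minus_left: "crs (- x) y = - crs x y"
  by (simp add: crs_def)
lemma crs_minus_right: "crs x (- y) = - crs x y"
  by (simp add: crs_def)
lemma crs_self: "crs x x = 0"
  by (simp add: crs_def algebra_simps)
lemma crs_zero [simp]: "crs 0 y = 0" "crs x 0 = 0"
  by (simp_all add: crs_def)
lemma crs_swap: "crs y x = - crs x y"
  by (simp add: crs_def algebra_simps)

lemmas crs_bilinear = crs_add_left crs_add_right crs_minus_left crs_minus_right crs_self crs_scale

lemma real_multiple_iff_crs:
  assumes "x \<noteq> 0"
  shows "(\<exists>c::real. y = of_real c * x) \<longleftrightarrow> crs x y = 0"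
proof
  assume "\<exists>c::real. y = of_real c * x"
  then show "crs x y = 0" by (auto simp: crs_def algebra_simps)
next
  assume h: "crs x y = 0"
  have n: "(Re x)^2 + (Im x)^2 \<noteq> 0" using assms
    by (metis complex_eq_0 power2_eq_square)
  define c where "c = (Re x * Re y + Im x * Im y) / ((Re x)^2 + (Im x)^2)"
  have "y = of_real c * x"
    using n h unfolding c_def crs_def
    by (intro complex_eqI) (simp_all add: field_simps power2_eq_square)
  then show "\<exists>c::real. y = of_real c * x" by blast
qed

lemma crs_independent:
  assumes "of_real a * x = of_real b * y" and "crs x y \<noteq> 0"
  shows "a = 0" and "b = 0"
proof -
  have r: "a * Re x = b * Re y" "a * Im x = b * Im y"
    using arg_cong[OF assms(1), of Re] arg_cong[OF assms(1), of Im] by auto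
  have "a * crs x y = (a * Re x) * Im y - (a * Im x) * Re y" by (simp add: crs_def algebra_simps)
  also have "\<dots> = 0" unfolding r by (simp add: algebra_simps)
  finally show "a = 0" using assms(2) by simp
  have "b * crs x y = Re x * (b * Im y) - Im x * (b * Re y)" by (simp add: crs_def algebra_simps)
  also have "\<dots> = 0" unfolding r[symmetric] by (simp add: algebra_simps)
  finally show "b = 0" using assms(2) by simp
qed

lemma crs_parallel: "b - a = of_real r * d \<Longrightarrow> c - a = of_real s * d \<Longrightarrow> crs (b - a) (c - a) = 0"
  by (simp add: crs_scale crs_self)

lemma crs_combination: "crs (of_real v * a - of_real w * b) a = w * crs a b"
  by (simp add: crs_def algebra_simps)

definition cnondeg :: "complex \<Rightarrow> complex \<Rightarrow> complex \<Rightarrow> complex \<Rightarrow> bool" where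
  "cnondeg z0 z1 z2 z3 \<longleftrightarrow>
     crs (z1 - z0) (z2 - z0) \<noteq> 0 \<and> crs (z1 - z0) (z3 - z0) \<noteq> 0 \<and>
     crs (z2 - z0) (z3 - z0) \<noteq> 0 \<and> crs (z2 - z1) (z3 - z1) \<noteq> 0 \<and>
     crs (z2 - z0) (z3 - z1) \<noteq> 0"

lemma cnondeg_distinct: "cnondeg z0 z1 z2 z3 \<Longrightarrow> distinct [z0, z1, z2, z3]"
  by (auto simp: cnondeg_def crs_self)

lemma cnondeg_diagonal_point:
  assumes nd: "cnondeg z0 z1 z2 z3"
  obtains s t :: real
  where "z0 + of_real s * (z2 - z0) = z1 + of_real t * (z3 - z1)"
    and "z0 + of_real s * (z2 - z0) \<notin> {z0, z1, z2, z3}"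
proof -
  define a where "a = z2 - z0"
  define b where "b = z3 - z1"
  define k where "k = crs a b"
  have k0: "k \<noteq> 0" using nd unfolding cnondeg_def k_def a_def b_def by auto
  define s where "s = crs (z1 - z0) b / k"
  define t where "t = crs (z1 - z0) a / k"
  have meet: "z0 + of_real s * a = z1 + of_real t * b"
    using k0 unfolding s_def t_def k_def crs_def
    by (intro complex_eqI) (simp_all add: field_simps; simp add: algebra_simps)+
  have "z0 + of_real s * a \<noteq> z0"
  proof
    assume "z0 + of_real s * a = z0"
    then have z0: "z0 = z1 + of_real t * b" using meet by simp
    have "z3 = z1 + b" by (simp add: b_def)
    then have "z1 - z0 = of_real (- t) * b" "z3 - z0 = of_real (1 - t) * b"
      unfolding z0 by (simp_all add: algebra_simps)
    then have "crs (z1 - z0) (z3 - z0) = 0" by (rule crs_parallel)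
    then show False using nd unfolding cnondeg_def by auto
  qed
  moreover have "z0 + of_real s * a \<noteq> z1"
  proof
    assume "z0 + of_real s * a = z1"
    then have "z1 - z0 = of_real s * a" "z2 - z0 = of_real 1 * a" by (auto simp: a_def)
    then have "crs (z1 - z0) (z2 - z0) = 0" by (rule crs_parallel)
    then show False using nd unfolding cnondeg_def by auto
  qed
  moreover have "z0 + of_real s * a \<noteq> z2"
  proof
    assume "z0 + of_real s * a = z2"
    then have "z2 - z1 = of_real t * b" "z3 - z1 = of_real 1 * b" using meet by (auto simp: b_def)
    then have "crs (z2 - z1) (z3 - z1) = 0" by (rule crs_parallel)
    then show False using nd unfolding cnondeg_def by auto
  qed
  moreover have "z0 + of_real s * a \<noteq> z3"
  proof
    assume "z0 + of_real s * a = z3"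
    then have "z2 - z0 = of_real 1 * a" "z3 - z0 = of_real s * a" by (auto simp: a_def)
    then have "crs (z2 - z0) (z3 - z0) = 0" by (rule crs_parallel)
    then show False using nd unfolding cnondeg_def by auto
  qed
  ultimately show ?thesis using that meet unfolding a_def b_def by auto
qed

text \<open>The cross-ratio of four distinct points on a circle centred at \<open>0\<close> is real:
  conjugation acts on such points as the inversion \<open>z \<mapsto> r\<^sup>2/z\<close>, which preserves the cross-ratio.\<close>

lemma concyclic_cross_ratio_real:
  fixes x y z w :: complex
  assumes "cmod x = r" "cmod y = r" "cmod z = r" "cmod w = r" "r \<noteq> 0"
    and "x \<noteq> y" "y \<noteq> z" "z \<noteq> w" "w \<noteq> x"
  shows "(x - y) * inverse (y - z) * (z - w) * inverse (w - x) \<in> \<real>"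
proof -
  define R where "R = complex_of_real (r^2)"
  have R0: "R \<noteq> 0" using assms(5) by (simp add: R_def)
  have nz: "x \<noteq> 0" "y \<noteq> 0" "z \<noteq> 0" "w \<noteq> 0" using assms(1-5) by auto
  have "\<And>v. cmod v = r \<Longrightarrow> cnj v = R / v"
    unfolding R_def by (metis complex_norm_square nonzero_mult_div_cancel_left norm_zero assms(5))
  then have c: "cnj x = R / x" "cnj y = R / y" "cnj z = R / z" "cnj w = R / w"
    using assms(1-4) by auto
  have X: "(x - y) * inverse (y - z) * (z - w) * inverse (w - x) = ((x - y) * (z - w)) / ((y - z) * (w - x))"
    by (simp add: divide_inverse)
  define K where "K = R * R / (x * y * z * w)"
  have K0: "K \<noteq> 0" using nz R0 by (simp add: K_def)
  have n: "(R/x - R/y) * (R/z - R/w) = K * ((x - y) * (z - w))"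
    unfolding K_def using nz by (simp add: field_simps; simp add: algebra_simps)
  have m: "(R/y - R/z) * (R/w - R/x) = K * ((y - z) * (w - x))"
    unfolding K_def using nz by (simp add: field_simps; simp add: algebra_simps)
  have "cnj (((x - y) * (z - w)) / ((y - z) * (w - x))) = ((R/x - R/y) * (R/z - R/w)) / ((R/y - R/z) * (R/w - R/x))"
    by (simp add: c)
  also have "\<dots> = ((x - y) * (z - w)) / ((y - z) * (w - x))"
    unfolding n m using K0 by simp
  finally show ?thesis unfolding X Reals_cnj_iff .
qed

lemma cnj_inverse_scaled: "x \<noteq> 0 \<Longrightarrow> cnj (1 / (of_real k * x)) = of_real (1 / (k * (cmod x)^2)) * x"
proof -
  assume x: "x \<noteq> 0"
  have "of_real ((cmod x)^2) = x * cnj x" by (rule complex_norm_square)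
  then show ?thesis using x
    by (cases "k = 0") (simp_all add: field_simps)
qed

lemma real_over_cnj: "d \<noteq> 0 \<Longrightarrow> - of_real r / cnj d = of_real (- r / (cmod d)^2) * d"
proof -
  assume d: "d \<noteq> 0"
  have e: "of_real (- r / (cmod d)^2) = - of_real r / (d * cnj d)"
    by (simp add: complex_norm_square[symmetric])
  have "cnj d \<noteq> 0" using d by simp
  then show ?thesis unfolding e using d by (simp add: field_simps)
qed

text \<open>A non-degenerate complex quadrilateral, given by its closing edge vectors
  \<open>x1, \<dots>, x4\<close> (vertices \<open>0, x1, x1 + x2, x1 + x2 + x3\<close>), whose cross-ratio
  \<open>q = x1 x3 / (x2 x4)\<close> is real.\<close>

locale real_cr_quad =
  fixes x1 x2 x3 x4 :: complex and q :: real
  assumes closed: "x1 + x2 + x3 + x4 = 0"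
    and nondeg: "cnondeg 0 x1 (x1 + x2) (x1 + x2 + x3)"
    and q_eq: "of_real q = x1 * x3 / (x2 * x4)"
begin

lemma x4_eq: "x4 = - (x1 + x2 + x3)"
  using closed by (simp add: algebra_simps eq_neg_iff_add_eq_0)

lemma crs_nonzero:
  "crs x1 x2 \<noteq> 0" "crs x2 x3 \<noteq> 0" "crs x3 x4 \<noteq> 0" "crs x4 x1 \<noteq> 0"
  "crs x2 (x2 + x3) \<noteq> 0" "crs x3 (x1 + x2) \<noteq> 0" "crs (x1 + x2) (x2 + x3) \<noteq> 0"
  using nondeg unfolding cnondeg_def x4_eq by (simp_all add: crs_def algebra_simps)

lemma edges_nonzero: "x1 \<noteq> 0" "x2 \<noteq> 0" "x3 \<noteq> 0" "x4 \<noteq> 0" "x1 + x2 \<noteq> 0" "x2 + x3 \<noteq> 0"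
  using crs_nonzero by auto

lemma q_nonzero: "q \<noteq> 0" using q_eq edges_nonzero by auto

lemma inverse_q_edges:
  "1 / (of_real q * x2) = x4 / (x1 * x3)" "1 / (of_real q * x4) = x2 / (x1 * x3)"
  using edges_nonzero q_nonzero by (simp_all add: q_eq field_simps)

lemma reciprocal_sum: "1 / x1 + 1 / (of_real q * x2) + 1 / x3 + 1 / (of_real q * x4) = 0"
proof -
  have "1 / x1 + 1 / (of_real q * x2) + 1 / x3 + 1 / (of_real q * x4) = (x1 + x2 + x3 + x4) / (x1 * x3)"
    unfolding inverse_q_edges using edges_nonzero by (simp add: field_simps)
  then show ?thesis using closed by simp
qed

text \<open>The dual edges are \<open>cnj (1/x1)\<close>, \<open>cnj (1/(q x2))\<close>, \<open>cnj (1/x3)\<close>, \<open>cnj (1/(q x4))\<close>,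
  i.e. the edges \<open>x_i\<close> scaled by the real weights \<open>k_i\<close> below.\<close>

definition k1 where "k1 = 1 / (cmod x1)^2"
definition k2 where "k2 = 1 / (q * (cmod x2)^2)"
definition k3 where "k3 = 1 / (cmod x3)^2"
definition k4 where "k4 = 1 / (q * (cmod x4)^2)"

lemma dual_edges:
  "of_real k1 * x1 = cnj (1 / x1)" "of_real k2 * x2 = cnj (1 / (of_real q * x2))"
  "of_real k3 * x3 = cnj (1 / x3)" "of_real k4 * x4 = cnj (1 / (of_real q * x4))"
  using cnj_inverse_scaled[OF edges_nonzero(1), of 1] cnj_inverse_scaled[OF edges_nonzero(2), of q]
    cnj_inverse_scaled[OF edges_nonzero(3), of 1] cnj_inverse_scaled[OF edges_nonzero(4), of q]
  by (simp_all add: k1_def k2_def k3_def k4_def)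

lemma weights_nonzero: "k1 \<noteq> 0" "k2 \<noteq> 0" "k3 \<noteq> 0" "k4 \<noteq> 0"
  using edges_nonzero q_nonzero by (auto simp: k1_def k2_def k3_def k4_def)

lemma dual_closed: "of_real k1 * x1 + of_real k2 * x2 + of_real k3 * x3 + of_real k4 * x4 = 0"
  using arg_cong[OF reciprocal_sum, of cnj] unfolding dual_edges by simp

text \<open>\<open>Z\<close> is real because \<open>q\<close> is; it measures the dual diagonals.\<close>

definition Z where "Z = (x1 + x2) * (x2 + x3) / (x1 * x3)"

lemma Z_real: "Z = of_real (Re Z)"
proof -
  have qc: "of_real q = cnj x1 * cnj x3 / (cnj x2 * cnj x4)"
    using arg_cong[OF q_eq, of cnj] by simp
  have nzc: "cnj x1 \<noteq> 0" "cnj x2 \<noteq> 0" "cnj x3 \<noteq> 0" "cnj x4 \<noteq> 0" using edges_nonzero by auto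
  have P: "x1 * x3 * (cnj x2 * cnj x4) = cnj x1 * cnj x3 * (x2 * x4)"
    using q_eq qc edges_nonzero nzc by (simp add: field_simps)
  have y4: "cnj x4 = - (cnj x1 + cnj x2 + cnj x3)" using x4_eq by simp
  have id: "(cnj x1 + cnj x2) * (cnj x2 + cnj x3) * (x1 * x3) - (x1 + x2) * (x2 + x3) * (cnj x1 * cnj x3)
     = - (x1 * x3 * (cnj x2 * cnj x4) - cnj x1 * cnj x3 * (x2 * x4))"
    unfolding y4 x4_eq by (simp add: algebra_simps)
  have "(cnj x1 + cnj x2) * (cnj x2 + cnj x3) * (x1 * x3) = (x1 + x2) * (x2 + x3) * (cnj x1 * cnj x3)"
    using id P by simp
  then have "cnj Z = Z" unfolding Z_def using edges_nonzero nzc by (simp add: field_simps)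
  then show ?thesis by (metis Reals_cnj_iff of_real_Re)
qed

lemma dual_diagonal1:
  "of_real k1 * x1 + of_real k2 * x2 = of_real (- Re Z / (cmod (x2 + x3))^2) * (x2 + x3)"
proof -
  define d where "d = x2 + x3"
  have h1: "1 / x1 + 1 / (of_real q * x2) = - ((x1 + x2) / (x1 * x3))"
    unfolding inverse_q_edges x4_eq using edges_nonzero by (simp add: field_simps; simp add: algebra_simps)
  have h2: "Z = (x1 + x2) / (x1 * x3) * d" unfolding Z_def d_def by simp
  have S: "1 / x1 + 1 / (of_real q * x2) = - Z / d"
    unfolding h1 h2 using edges_nonzero d_def by simp
  have "of_real k1 * x1 + of_real k2 * x2 = cnj (- Z / d)" unfolding dual_edges S[symmetric] by simp
  also have "\<dots> = - of_real (Re Z) / cnj d" by (subst Z_real) simp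
  also have "\<dots> = of_real (- Re Z / (cmod d)^2) * d"
    using real_over_cnj edges_nonzero d_def by blast
  finally show ?thesis unfolding d_def .
qed

lemma dual_diagonal2:
  "of_real k2 * x2 + of_real k3 * x3 = of_real (- Re Z / (cmod (x1 + x2))^2) * (x1 + x2)"
proof -
  define d where "d = x1 + x2"
  have h1: "1 / (of_real q * x2) + 1 / x3 = - ((x2 + x3) / (x1 * x3))"
    unfolding inverse_q_edges x4_eq using edges_nonzero by (simp add: field_simps; simp add: algebra_simps)
  have h2: "Z = (x2 + x3) / (x1 * x3) * d" unfolding Z_def d_def by simp
  have S: "1 / (of_real q * x2) + 1 / x3 = - Z / d"
    unfolding h1 h2 using edges_nonzero d_def by simp
  have "of_real k2 * x2 + of_real k3 * x3 = cnj (- Z / d)" unfolding dual_edges S[symmetric] by simp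
  also have "\<dots> = - of_real (Re Z) / cnj d" by (subst Z_real) simp
  also have "\<dots> = of_real (- Re Z / (cmod d)^2) * d"
    using real_over_cnj edges_nonzero d_def by blast
  finally show ?thesis unfolding d_def .
qed

lemma eq_by_difference:
  "a = b \<Longrightarrow> c = d \<Longrightarrow> x - y = (a - b) - l * (c - d) \<Longrightarrow> x = (y::complex)"
  by simp

lemma dual_unique:
  assumes closes: "of_real c1 * x1 + of_real c2 * x2 + of_real c3 * x3 + of_real c4 * x4 = 0"
    and diag1: "of_real c1 * x1 + of_real c2 * x2 = of_real c5 * (x2 + x3)"
    and diag2: "of_real c2 * x2 + of_real c3 * x3 = of_real c6 * (x1 + x2)"
  shows "\<exists>l. c1 = l * k1 \<and> c2 = l * k2 \<and> c3 = l * k3 \<and> c4 = l * k4"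
proof -
  define l where "l = c1 / k1"
  have h1: "c1 = l * k1" using weights_nonzero by (simp add: l_def)
  define C5 where "C5 = - Re Z / (cmod (x2 + x3))^2"
  define C6 where "C6 = - Re Z / (cmod (x1 + x2))^2"
  have "of_real (c2 - l * k2) * x2 = of_real (c5 - l * C5) * (x2 + x3)"
    by (rule eq_by_difference[OF diag1 dual_diagonal1[folded C5_def], of _ _ "of_real l"])
      (simp add: h1 algebra_simps)
  from crs_independent(1)[OF this crs_nonzero(5)] have h2: "c2 = l * k2" by simp
  have "of_real (c3 - l * k3) * x3 = of_real (c6 - l * C6) * (x1 + x2)"
    by (rule eq_by_difference[OF diag2 dual_diagonal2[folded C6_def], of _ _ "of_real l"])
      (simp add: h2 algebra_simps)
  from crs_independent(1)[OF this crs_nonzero(6)] have h3: "c3 = l * k3" by simp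
  have "of_real (c4 - l * k4) * x4 = of_real 0 * x4"
    by (rule eq_by_difference[OF closes dual_closed, of _ _ "of_real l"])
      (simp add: h1 h2 h3 algebra_simps)
  then have "complex_of_real (c4 - l * k4) = 0" using edges_nonzero(4) by simp
  then have h4: "c4 = l * k4" by (simp only: of_real_eq_0_iff right_minus_eq)
  show ?thesis using h1 h2 h3 h4 by blast
qed

lemma dual_nondeg:
  assumes mu: "\<mu> \<noteq> 0"
  defines "W1 \<equiv> of_real (\<mu> * k1) * x1" and "W2 \<equiv> of_real (\<mu> * k2) * x2"
    and "W3 \<equiv> of_real (\<mu> * k3) * x3"
  shows "cnondeg 0 W1 (W1 + W2) (W1 + W2 + W3)"
proof -
  define W4 where "W4 = of_real (\<mu> * k4) * x4"
  have "W1 + W2 + W3 + W4 = of_real \<mu> * (of_real k1 * x1 + of_real k2 * x2 + of_real k3 * x3 + of_real k4 * x4)"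
    unfolding W1_def W2_def W3_def W4_def by (simp add: algebra_simps)
  then have W4_eq: "W1 + W2 + W3 = - W4" using dual_closed by (simp add: eq_neg_iff_add_eq_0)
  then have W4_eq': "W4 = - (W1 + W2 + W3)" by (metis minus_minus)
  have W12: "W1 + W2 = - (W3 + W4)" and W23: "- W4 - W1 = W2 + W3"
    unfolding W4_eq' by (simp_all add: algebra_simps)
  define C5 where "C5 = - Re Z / (cmod (x2 + x3))^2"
  define C6 where "C6 = - Re Z / (cmod (x1 + x2))^2"
  have "Z \<noteq> 0" using edges_nonzero by (simp add: Z_def)
  then have "Re Z \<noteq> 0" by (metis Z_real of_real_0)
  then have C56: "C5 \<noteq> 0" "C6 \<noteq> 0" using edges_nonzero by (simp_all add: C5_def C6_def)
  have W12': "W1 + W2 = of_real (\<mu> * C5) * (x2 + x3)"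
    using arg_cong[OF dual_diagonal1, of "\<lambda>z. of_real \<mu> * z"]
    unfolding W1_def W2_def C5_def by (simp add: algebra_simps)
  have W23': "W2 + W3 = of_real (\<mu> * C6) * (x1 + x2)"
    using arg_cong[OF dual_diagonal2, of "\<lambda>z. of_real \<mu> * z"]
    unfolding W2_def W3_def C6_def by (simp add: algebra_simps)
  have a1: "crs W1 (W1 + W2) = (\<mu> * k1) * (\<mu> * k2) * crs x1 x2"
    unfolding W1_def W2_def by (simp only: crs_bilinear; simp)
  have a2: "crs W1 (- W4) = - ((\<mu> * k1) * (\<mu> * k4) * crs x1 x4)"
    unfolding W1_def W4_def by (simp only: crs_bilinear; simp)
  have a3: "crs (W1 + W2) (- W4) = (\<mu> * k3) * (\<mu> * k4) * crs x3 x4"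
    unfolding W12 W3_def W4_def by (simp only: crs_bilinear; simp)
  have a4: "crs (W1 + W2 - W1) (- W4 - W1) = (\<mu> * k2) * (\<mu> * k3) * crs x2 x3"
    unfolding W23 W2_def W3_def by (simp only: add_diff_cancel_left' crs_bilinear; simp)
  have a5: "crs (W1 + W2) (- W4 - W1) = (\<mu> * C5) * (\<mu> * C6) * crs (x2 + x3) (x1 + x2)"
    unfolding W23 W12' W23' by (simp only: crs_bilinear; simp)
  have "crs x1 x4 \<noteq> 0" "crs (x2 + x3) (x1 + x2) \<noteq> 0"
    using crs_nonzero(4,7) by (metis crs_swap neg_equal_0_iff_equal)+
  then show ?thesis
    unfolding cnondeg_def W4_eq diff_zero
    using a1 a2 a3 a4 a5 weights_nonzero crs_nonzero C56 mu by simp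
qed

end

locale orthonormal_frame =
  fixes U V :: "'a::euclidean_space"
  assumes norm_U: "norm U = 1" and norm_V: "norm V = 1" and orth: "inner U V = 0"
begin

definition Lin :: "complex \<Rightarrow> 'a" where "Lin z = Re z *\<^sub>R U + Im z *\<^sub>R V"

lemma Lin_add: "Lin (z + w) = Lin z + Lin w" by (simp add: Lin_def algebra_simps)
lemma Lin_diff: "Lin (z - w) = Lin z - Lin w" by (simp add: Lin_def algebra_simps)
lemma Lin_scale: "Lin (of_real r * z) = r *\<^sub>R Lin z" by (simp add: Lin_def algebra_simps)
lemma Lin_zero: "Lin 0 = 0" by (simp add: Lin_def)

lemma inner_Lin: "inner (Lin z) (Lin w) = Re z * Re w + Im z * Im w"
proof -
  have "inner U U = 1" "inner V V = 1" "inner V U = 0"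
    using norm_U norm_V orth by (simp_all add: dot_square_norm inner_commute)
  then show ?thesis using orth by (simp add: Lin_def inner_add_left inner_add_right)
qed

lemma norm_Lin: "norm (Lin z) = cmod z"
proof -
  have "(norm (Lin z))^2 = (cmod z)^2"
    unfolding cmod_power2 power2_norm_eq_inner inner_Lin by (simp add: power2_eq_square)
  then show ?thesis by (metis power2_eq_iff_nonneg norm_ge_zero)
qed

lemma Lin_eq_0: "Lin z = 0 \<longleftrightarrow> z = 0"
  by (metis norm_Lin norm_eq_zero)

lemma Lin_inj: "Lin z = Lin w \<longleftrightarrow> z = w"
  by (metis Lin_diff Lin_eq_0 eq_iff_diff_eq_0)

abbreviation emb :: "'a \<Rightarrow> complex \<Rightarrow> 'a" where "emb p \<equiv> plane_emb p U V"

lemma emb_eq: "emb p z = p + Lin z" by (simp add: plane_emb_def Lin_def add.assoc)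
lemma emb_diff: "emb p z - emb p w = Lin (z - w)" by (simp add: emb_eq Lin_diff)
lemma emb_inj: "emb p z = emb p w \<longleftrightarrow> z = w" by (simp add: emb_eq Lin_inj)

lemma emb_affine_comb:
  assumes "u + v = 1"
  shows "u *\<^sub>R emb p a + v *\<^sub>R emb p b = emb p (a + of_real v * (b - a))"
proof -
  have u: "u = 1 - v" using assms by simp
  show ?thesis unfolding u emb_eq Lin_add Lin_scale Lin_diff by (simp add: algebra_simps)
qed

lemma collinear_0_Lin: "collinear {0, Lin x, Lin y} \<longleftrightarrow> crs x y = 0"
proof (cases "x = 0")
  case True then show ?thesis by (simp add: Lin_zero collinear_2)
next
  case False
  have "collinear {0, Lin x, Lin y} \<longleftrightarrow> (y = 0 \<or> (\<exists>c. Lin y = c *\<^sub>R Lin x))"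
    using False by (simp add: collinear_lemma Lin_eq_0)
  also have "\<dots> \<longleftrightarrow> (\<exists>c::real. y = of_real c * x)"
    by (metis Lin_inj Lin_scale mult_zero_left of_real_0)
  also have "\<dots> \<longleftrightarrow> crs x y = 0" using real_multiple_iff_crs[OF False] .
  finally show ?thesis .
qed

lemma collinear_emb: "collinear {emb p a, emb p b, emb p c} \<longleftrightarrow> crs (b - a) (c - a) = 0"
proof -
  have "collinear {emb p a, emb p b, emb p c} \<longleftrightarrow> collinear {0, emb p b - emb p a, emb p c - emb p a}"
    using collinear_3[of "emb p b" "emb p a" "emb p c"] by (simp add: insert_commute NO_MATCH_def)
  also have "\<dots> \<longleftrightarrow> crs (b - a) (c - a) = 0" by (simp add: emb_diff collinear_0_Lin)
  finally show ?thesis .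
qed

lemma aff_dim_emb: "aff_dim {emb p a, emb p b, emb p c, emb p d} \<le> 2"
proof -
  have "emb p z \<in> affine hull {p, p + U, p + V}" for z
  proof -
    have "emb p z = (1 - Re z - Im z) *\<^sub>R p + Re z *\<^sub>R (p + U) + Im z *\<^sub>R (p + V)"
      by (simp add: plane_emb_def algebra_simps)
    then show ?thesis unfolding affine_hull_3 by (smt (verit) mem_Collect_eq)
  qed
  then have "aff_dim {emb p a, emb p b, emb p c, emb p d} \<le> aff_dim {p, p + U, p + V}"
    by (metis aff_dim_affine_hull aff_dim_subset empty_subsetI insert_subset)
  also have "\<dots> \<le> int (card {p, p + U, p + V}) - 1" by (rule aff_dim_le_card) simp
  also have "card {p, p + U, p + V} \<le> 3" by (auto simp: card_insert_if)
  finally show ?thesis by linarith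
qed

lemma emb_in_affine_hull:
  "emb p (a + of_real s * (b - a)) \<in> affine hull {emb p a, emb p b}"
proof -
  have "(1 - s) *\<^sub>R emb p a + s *\<^sub>R emb p b = emb p (a + of_real s * (b - a))"
    by (rule emb_affine_comb) simp
  then show ?thesis
    unfolding affine_hull_2 by (metis (mono_tags, lifting) diff_add_cancel mem_Collect_eq)
qed

lemma nondeg_emb:
  "nondeg_planar_quad (emb p z0) (emb p z1) (emb p z2) (emb p z3) \<longleftrightarrow> cnondeg z0 z1 z2 z3"
proof
  assume nd: "nondeg_planar_quad (emb p z0) (emb p z1) (emb p z2) (emb p z3)"
  then have c: "crs (z1 - z0) (z2 - z0) \<noteq> 0" "crs (z1 - z0) (z3 - z0) \<noteq> 0"
      "crs (z2 - z0) (z3 - z0) \<noteq> 0" "crs (z2 - z1) (z3 - z1) \<noteq> 0"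
    unfolding nondeg_planar_quad_def collinear_emb by auto
  from nd obtain X where "X \<in> affine hull {emb p z0, emb p z2}" "X \<in> affine hull {emb p z1, emb p z3}"
    unfolding nondeg_planar_quad_def by blast
  then obtain u v u' v' where "u + v = 1" "X = u *\<^sub>R emb p z0 + v *\<^sub>R emb p z2"
    "u' + v' = 1" "X = u' *\<^sub>R emb p z1 + v' *\<^sub>R emb p z3"
    unfolding affine_hull_2 by blast
  then have "z0 + of_real v * (z2 - z0) = z1 + of_real v' * (z3 - z1)"
    by (metis emb_affine_comb emb_inj)
  then have "z1 - z0 = of_real v * (z2 - z0) - of_real v' * (z3 - z1)"
    by (simp add: algebra_simps)
  then have "crs (z1 - z0) (z2 - z0) = v' * crs (z2 - z0) (z3 - z1)"
    by (simp only: crs_combination)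
  then have "crs (z2 - z0) (z3 - z1) \<noteq> 0" using c by auto
  with c show "cnondeg z0 z1 z2 z3" unfolding cnondeg_def by auto
next
  assume cn: "cnondeg z0 z1 z2 z3"
  obtain s t :: real where meet: "z0 + of_real s * (z2 - z0) = z1 + of_real t * (z3 - z1)"
    and off: "z0 + of_real s * (z2 - z0) \<notin> {z0, z1, z2, z3}"
    using cnondeg_diagonal_point[OF cn] by blast
  define X where "X = emb p (z0 + of_real s * (z2 - z0))"
  have "X \<in> affine hull {emb p z0, emb p z2}"
    unfolding X_def by (rule emb_in_affine_hull)
  moreover have "X \<in> affine hull {emb p z1, emb p z3}"
    unfolding X_def meet by (rule emb_in_affine_hull)
  moreover have "X \<notin> {emb p z0, emb p z1, emb p z2, emb p z3}"
    using off by (auto simp: X_def emb_inj)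
  moreover have "distinct [emb p z0, emb p z1, emb p z2, emb p z3]"
    using cnondeg_distinct[OF cn] by (auto simp: emb_inj)
  ultimately show "nondeg_planar_quad (emb p z0) (emb p z1) (emb p z2) (emb p z3)"
    using cn aff_dim_emb unfolding nondeg_planar_quad_def collinear_emb cnondeg_def by blast
qed

lemma affine_hull_in_frame:
  assumes "B - A = Lin b" and "D - A = Lin d" and "x \<in> affine hull {A, B, D}"
  shows "\<exists>z. emb A z = x"
proof -
  obtain u v w where uvw: "u + v + w = 1" "x = u *\<^sub>R A + v *\<^sub>R B + w *\<^sub>R D"
    using assms(3) unfolding affine_hull_3 by blast
  have "emb A (of_real v * b + of_real w * d) = A + v *\<^sub>R (B - A) + w *\<^sub>R (D - A)"
    by (simp add: emb_eq Lin_add Lin_scale assms(1,2) add.assoc)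
  also have "\<dots> = x"
    using uvw by (simp add: algebra_simps flip: scaleR_add_left)
  finally show ?thesis by blast
qed

end

text \<open>Gram--Schmidt on the sides of a non-degenerate triangle yields an orthonormal frame
  of its plane.\<close>

lemma frame_of_triangle:
  fixes A B D :: "'a::euclidean_space"
  assumes nc: "\<not> collinear {A, B, D}"
  obtains U V b d where "orthonormal_frame U V"
    and "B - A = orthonormal_frame.Lin U V b" and "D - A = orthonormal_frame.Lin U V d"
proof -
  have BA: "B \<noteq> A" using nc by (auto simp: collinear_2)
  define U where "U = (1 / norm (B - A)) *\<^sub>R (B - A)"
  define W where "W = D - A"
  define V0 where "V0 = W - inner W U *\<^sub>R U"
  have nU: "norm U = 1" using BA by (simp add: U_def)
  have BAU: "B - A = norm (B - A) *\<^sub>R U" using BA by (simp add: U_def)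
  have V0: "V0 \<noteq> 0"
  proof
    assume "V0 = 0"
    then have "D - A = (inner W U / norm (B - A)) *\<^sub>R (B - A)"
      using BA unfolding V0_def W_def U_def by simp
    then have "collinear {0, B - A, D - A}" unfolding collinear_lemma by blast
    then have "collinear {B, A, D}" by (subst collinear_3) (auto simp: NO_MATCH_def)
    then show False using nc by (simp add: insert_commute)
  qed
  define V where "V = (1 / norm V0) *\<^sub>R V0"
  have nV: "norm V = 1" using V0 by (simp add: V_def)
  have "inner U V0 = 0"
    using nU unfolding V0_def by (simp add: inner_diff_right dot_square_norm inner_commute)
  then have UV: "inner U V = 0" by (simp add: V_def)
  interpret orthonormal_frame U V using nU nV UV by unfold_locales
  have "Lin (Complex (norm (B - A)) 0) = B - A" using BAU by (simp add: Lin_def)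
  moreover have "Lin (Complex (inner W U) (norm V0)) = D - A"
  proof -
    have "V0 = norm V0 *\<^sub>R V" using V0 by (simp add: V_def)
    then have "Lin (Complex (inner W U) (norm V0)) = inner W U *\<^sub>R U + V0" by (simp add: Lin_def)
    then show ?thesis by (simp add: V0_def W_def)
  qed
  ultimately show ?thesis using that orthonormal_frame_axioms by metis
qed

lemma concircular_quad_in_frame:
  fixes A B C D :: "'a::euclidean_space"
  assumes nd: "nondeg_planar_quad A B C D" and cc: "concircular A B C D"
  obtains U V p z0 z1 z2 z3 where "orthonormal_frame U V"
    and "A = plane_emb p U V z0" "B = plane_emb p U V z1"
    and "C = plane_emb p U V z2" "D = plane_emb p U V z3"
    and "(z0 - z1) * inverse (z1 - z2) * (z2 - z3) * inverse (z3 - z0) \<in> \<real>"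
proof -
  have nc: "\<not> collinear {A, B, D}" and dst: "distinct [A, B, C, D]"
    and ad: "aff_dim {A, B, C, D} \<le> 2"
    using nd unfolding nondeg_planar_quad_def by auto
  have set: "{A, B, C, D} = insert C {A, B, D}" by auto
  have C_hull: "C \<in> affine hull {A, B, D}"
  proof (rule ccontr)
    assume "C \<notin> affine hull {A, B, D}"
    then have "aff_dim {A, B, C, D} = aff_dim {A, B, D} + 1" unfolding set aff_dim_insert by simp
    then show False using ad nc collinear_aff_dim by force
  qed
  have hull_eq: "affine hull {A, B, C, D} = affine hull {A, B, D}"
    unfolding set using C_hull by (rule hull_redundant)
  from cc obtain c r where c: "c \<in> affine hull {A, B, D}"
    and r: "dist A c = r" "dist B c = r" "dist C c = r" "dist D c = r"
    unfolding concircular_def hull_eq by blast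
  obtain U V b d where frame: "orthonormal_frame U V"
    and b: "B - A = orthonormal_frame.Lin U V b" and d: "D - A = orthonormal_frame.Lin U V d"
    using frame_of_triangle[OF nc] by blast
  interpret orthonormal_frame U V by (rule frame)
  have "\<exists>z. emb A z = x" if "x \<in> affine hull {A, B, D}" for x
    using affine_hull_in_frame[OF b d that] .
  moreover have "A \<in> affine hull {A, B, D}" "B \<in> affine hull {A, B, D}" "D \<in> affine hull {A, B, D}"
    by (simp_all add: hull_inc)
  ultimately obtain z0 z1 z2 z3 zc where z: "emb A z0 = A" "emb A z1 = B" "emb A z2 = C" "emb A z3 = D"
    and zc: "emb A zc = c"
    using C_hull c by metis
  have "dist (emb A z) (emb A w) = cmod (z - w)" for z w
    by (simp add: dist_norm emb_diff norm_Lin)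
  then have "cmod (z0 - zc) = r" "cmod (z1 - zc) = r" "cmod (z2 - zc) = r" "cmod (z3 - zc) = r"
    using r z zc by metis+
  moreover have "z0 \<noteq> z1" "z1 \<noteq> z2" "z2 \<noteq> z3" "z3 \<noteq> z0" using dst z by auto
  moreover from this have "r \<noteq> 0" using calculation by auto
  ultimately have "((z0 - zc) - (z1 - zc)) * inverse ((z1 - zc) - (z2 - zc)) *
      ((z2 - zc) - (z3 - zc)) * inverse ((z3 - zc) - (z0 - zc)) \<in> \<real>"
    by (intro concyclic_cross_ratio_real) auto
  then have "(z0 - z1) * inverse (z1 - z2) * (z2 - z3) * inverse (z3 - z0) \<in> \<real>" by simp
  from that[OF frame z[symmetric] this] show ?thesis .
qed

text \<open>\<open>cross_ratio\<close> is defined through some choice of frame; in that frame it is the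
  complex cross-ratio of the coordinates.\<close>

lemma cross_ratio_in_frame:
  assumes "orthonormal_frame U V"
    and "A = plane_emb p U V z0" "B = plane_emb p U V z1"
    and "C = plane_emb p U V z2" "D = plane_emb p U V z3"
    and real: "(z0 - z1) * inverse (z1 - z2) * (z2 - z3) * inverse (z3 - z0) \<in> \<real>"
  obtains U' V' p' w0 w1 w2 w3 where "orthonormal_frame U' V'"
    and "A = plane_emb p' U' V' w0" "B = plane_emb p' U' V' w1"
    and "C = plane_emb p' U' V' w2" "D = plane_emb p' U' V' w3"
    and "of_real (cross_ratio A B C D) = (w0 - w1) * inverse (w1 - w2) * (w2 - w3) * inverse (w3 - w0)"
proof -
  let ?P = "\<lambda>r::real. \<exists>p u v za zb zc zd.
      norm u = 1 \<and> norm v = 1 \<and> inner u v = 0 \<and>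
      plane_emb p u v za = A \<and> plane_emb p u v zb = B \<and>
      plane_emb p u v zc = C \<and> plane_emb p u v zd = D \<and>
      complex_of_real r = (za - zb) * inverse (zb - zc) * (zc - zd) * inverse (zd - za)"
  have "?P (Re ((z0 - z1) * inverse (z1 - z2) * (z2 - z3) * inverse (z3 - z0)))"
    using assms of_real_Re[OF real] unfolding orthonormal_frame_def
    by (rule_tac exI[of _ p], rule_tac exI[of _ U], rule_tac exI[of _ V]) auto
  from someI[of ?P, OF this] obtain p' u v w0 w1 w2 w3 where W:
    "norm u = 1" "norm v = 1" "inner u v = 0"
    "plane_emb p' u v w0 = A" "plane_emb p' u v w1 = B" "plane_emb p' u v w2 = C" "plane_emb p' u v w3 = D"
    "of_real (cross_ratio A B C D) = (w0 - w1) * inverse (w1 - w2) * (w2 - w3) * inverse (w3 - w0)"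
    unfolding cross_ratio_def by blast
  have "orthonormal_frame u v" using W(1-3) by (simp add: orthonormal_frame_def)
  from that[OF this W(4-7)[symmetric] W(8)] show ?thesis .
qed

lemma quad_coordinates:
  fixes A B C D :: "'a::euclidean_space"
  assumes nd: "nondeg_planar_quad A B C D" and cc: "concircular A B C D"
  obtains U V x1 x2 x3 x4 where "orthonormal_frame U V"
    and "B - A = orthonormal_frame.Lin U V x1" "C - B = orthonormal_frame.Lin U V x2"
    and "D - C = orthonormal_frame.Lin U V x3" "A - D = orthonormal_frame.Lin U V x4"
    and "real_cr_quad x1 x2 x3 x4 (cross_ratio A B C D)"
proof -
  obtain U0 V0 p0 y0 y1 y2 y3 where frame0: "orthonormal_frame U0 V0"
    and y: "A = plane_emb p0 U0 V0 y0" "B = plane_emb p0 U0 V0 y1"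
      "C = plane_emb p0 U0 V0 y2" "D = plane_emb p0 U0 V0 y3"
    and real: "(y0 - y1) * inverse (y1 - y2) * (y2 - y3) * inverse (y3 - y0) \<in> \<real>"
    by (rule concircular_quad_in_frame[OF nd cc])
  obtain U V p z0 z1 z2 z3 where frame: "orthonormal_frame U V"
    and z: "A = plane_emb p U V z0" "B = plane_emb p U V z1"
      "C = plane_emb p U V z2" "D = plane_emb p U V z3"
    and q: "of_real (cross_ratio A B C D) = (z0 - z1) * inverse (z1 - z2) * (z2 - z3) * inverse (z3 - z0)"
    by (rule cross_ratio_in_frame[OF frame0 y real])
  interpret orthonormal_frame U V by (rule frame)
  define x1 x2 x3 x4 where "x1 = z1 - z0" and "x2 = z2 - z1" and "x3 = z3 - z2" and "x4 = z0 - z3"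
  have "cnondeg z0 z1 z2 z3" using nd unfolding z nondeg_emb .
  then have "cnondeg 0 x1 (x1 + x2) (x1 + x2 + x3)"
    by (simp add: cnondeg_def x1_def x2_def x3_def)
  moreover have "z0 - z1 = - x1" "z1 - z2 = - x2" "z2 - z3 = - x3" "z3 - z0 = - x4"
    by (simp_all add: x1_def x2_def x3_def x4_def)
  then have "of_real (cross_ratio A B C D) = x1 * x3 / (x2 * x4)"
    unfolding q by (simp add: divide_inverse)
  ultimately have "real_cr_quad x1 x2 x3 x4 (cross_ratio A B C D)"
    by unfold_locales (simp_all add: x1_def x2_def x3_def x4_def)
  moreover have "B - A = Lin x1" "C - B = Lin x2" "D - C = Lin x3" "A - D = Lin x4"
    by (simp_all add: z emb_diff x1_def x2_def x3_def x4_def)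
  ultimately show ?thesis using that[OF frame] by blast
qed

definition inversion :: "'a::real_normed_vector \<Rightarrow> 'a" where
  "inversion x = (1 / (norm x)^2) *\<^sub>R x"

lemma inversion_minus: "inversion (- x) = - inversion x"
  by (simp add: inversion_def)

lemma inversion_swap: "inversion (a - b) = - inversion (b - a)"
  by (metis inversion_minus minus_diff_eq)

lemma inversion_eq_0: "inversion x = 0 \<longleftrightarrow> x = 0"
  by (simp add: inversion_def)

definition christoffel_dual_quad ::
    "real \<Rightarrow> 'a::euclidean_space \<Rightarrow> 'a \<Rightarrow> 'a \<Rightarrow> 'a \<Rightarrow> 'a \<Rightarrow> 'a \<Rightarrow> 'a \<Rightarrow> 'a \<Rightarrow> bool" where
  "christoffel_dual_quad \<mu> A B C D A' B' C' D' \<longleftrightarrow>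
     B' - A' = \<mu> *\<^sub>R inversion (B - A) \<and>
     C' - B' = (\<mu> / cross_ratio A B C D) *\<^sub>R inversion (C - B) \<and>
     D' - C' = \<mu> *\<^sub>R inversion (D - C) \<and>
     A' - D' = (\<mu> / cross_ratio A B C D) *\<^sub>R inversion (A - D)"

lemma (in real_cr_quad) inversion_weights:
  fixes e1 e2 e3 e4 :: "'a::real_normed_vector"
  assumes "norm e1 = cmod x1" "norm e2 = cmod x2" "norm e3 = cmod x3" "norm e4 = cmod x4"
  shows "\<mu> *\<^sub>R inversion e1 = (\<mu> * k1) *\<^sub>R e1" "(\<mu> / q) *\<^sub>R inversion e2 = (\<mu> * k2) *\<^sub>R e2"
    "\<mu> *\<^sub>R inversion e3 = (\<mu> * k3) *\<^sub>R e3" "(\<mu> / q) *\<^sub>R inversion e4 = (\<mu> * k4) *\<^sub>R e4"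
  using assms by (simp_all add: inversion_def k1_def k2_def k3_def k4_def)

context
  fixes A B C D :: "'a::euclidean_space"
  assumes nd: "nondeg_planar_quad A B C D" and cc: "concircular A B C D"
begin

lemma cross_ratio_nonzero: "cross_ratio A B C D \<noteq> 0"
  using quad_coordinates[OF nd cc] real_cr_quad.q_nonzero by metis

lemma christoffel_closing:
  "\<mu> *\<^sub>R inversion (B - A) + (\<mu> / cross_ratio A B C D) *\<^sub>R inversion (C - B)
     + \<mu> *\<^sub>R inversion (D - C) + (\<mu> / cross_ratio A B C D) *\<^sub>R inversion (A - D) = 0"
proof -
  obtain U V x1 x2 x3 x4 where frame: "orthonormal_frame U V"
    and e: "B - A = orthonormal_frame.Lin U V x1" "C - B = orthonormal_frame.Lin U V x2"
      "D - C = orthonormal_frame.Lin U V x3" "A - D = orthonormal_frame.Lin U V x4"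
    and cq: "real_cr_quad x1 x2 x3 x4 (cross_ratio A B C D)"
    by (rule quad_coordinates[OF nd cc])
  interpret orthonormal_frame U V by (rule frame)
  interpret real_cr_quad x1 x2 x3 x4 "cross_ratio A B C D" by (rule cq)
  have "Lin (of_real \<mu> * (of_real k1 * x1 + of_real k2 * x2 + of_real k3 * x3 + of_real k4 * x4)) = 0"
    by (simp add: dual_closed Lin_zero)
  moreover note inversion_weights[of "B - A" "C - B" "D - C" "A - D" \<mu>]
  ultimately show ?thesis unfolding e norm_Lin
    by (simp add: Lin_add Lin_scale scaleR_add_right)
qed

text \<open>Every quadrilateral dual to \<open>(A, B, C, D)\<close> is of Christoffel type: the edge
  weights forced by parallelity are proportional to the \<open>k_i\<close> by \<open>dual_unique\<close>.\<close>

lemma dual_quads_christoffel: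
  assumes dual: "dual_quads A B C D A' B' C' D'"
  shows "\<exists>\<mu>. christoffel_dual_quad \<mu> A B C D A' B' C' D'"
proof -
  obtain U V x1 x2 x3 x4 where frame: "orthonormal_frame U V"
    and e: "B - A = orthonormal_frame.Lin U V x1" "C - B = orthonormal_frame.Lin U V x2"
      "D - C = orthonormal_frame.Lin U V x3" "A - D = orthonormal_frame.Lin U V x4"
    and cq: "real_cr_quad x1 x2 x3 x4 (cross_ratio A B C D)"
    by (rule quad_coordinates[OF nd cc])
  interpret orthonormal_frame U V by (rule frame)
  interpret real_cr_quad x1 x2 x3 x4 "cross_ratio A B C D" by (rule cq)
  obtain c1 c2 c3 c4 c5 c6 where c:
    "B' - A' = c1 *\<^sub>R (B - A)" "C' - B' = c2 *\<^sub>R (C - B)"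
    "D' - C' = c3 *\<^sub>R (D - C)" "A' - D' = c4 *\<^sub>R (A - D)"
    "C' - A' = c5 *\<^sub>R (D - B)" "D' - B' = c6 *\<^sub>R (C - A)"
    using dual unfolding dual_quads_def parallel_def by blast
  have diag: "D - B = Lin (x2 + x3)" "C - A = Lin (x1 + x2)"
    using e by (simp_all add: Lin_add flip: e)
  have "(B' - A') + (C' - B') + (D' - C') + (A' - D') = 0"
    "(B' - A') + (C' - B') = C' - A'" "(C' - B') + (D' - C') = D' - B'"
    by simp_all
  then have "Lin (of_real c1 * x1 + of_real c2 * x2 + of_real c3 * x3 + of_real c4 * x4) = Lin 0"
    "Lin (of_real c1 * x1 + of_real c2 * x2) = Lin (of_real c5 * (x2 + x3))"
    "Lin (of_real c2 * x2 + of_real c3 * x3) = Lin (of_real c6 * (x1 + x2))"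
    unfolding c e diag by (simp_all add: Lin_add Lin_scale Lin_zero)
  then obtain l where "c1 = l * k1" "c2 = l * k2" "c3 = l * k3" "c4 = l * k4"
    using dual_unique unfolding Lin_inj by blast
  then have "christoffel_dual_quad l A B C D A' B' C' D'"
    unfolding christoffel_dual_quad_def c(1-4)
    using inversion_weights[of "B - A" "C - B" "D - C" "A - D" l] by (simp add: e norm_Lin)
  then show ?thesis ..
qed

lemma christoffel_dual_quads:
  assumes chr: "christoffel_dual_quad \<mu> A B C D A' B' C' D'"
  shows "dual_quads A B C D A' B' C' D'"
proof -
  obtain U V x1 x2 x3 x4 where frame: "orthonormal_frame U V"
    and e: "B - A = orthonormal_frame.Lin U V x1" "C - B = orthonormal_frame.Lin U V x2"
      "D - C = orthonormal_frame.Lin U V x3" "A - D = orthonormal_frame.Lin U V x4"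
    and cq: "real_cr_quad x1 x2 x3 x4 (cross_ratio A B C D)"
    by (rule quad_coordinates[OF nd cc])
  interpret orthonormal_frame U V by (rule frame)
  interpret real_cr_quad x1 x2 x3 x4 "cross_ratio A B C D" by (rule cq)
  have edges: "B' - A' = (\<mu> * k1) *\<^sub>R (B - A)" "C' - B' = (\<mu> * k2) *\<^sub>R (C - B)"
    "D' - C' = (\<mu> * k3) *\<^sub>R (D - C)" "A' - D' = (\<mu> * k4) *\<^sub>R (A - D)"
    using chr inversion_weights[of "B - A" "C - B" "D - C" "A - D" \<mu>]
    unfolding christoffel_dual_quad_def by (simp_all add: e norm_Lin)
  have diag: "D - B = Lin (x2 + x3)" "C - A = Lin (x1 + x2)"
    using e by (simp_all add: Lin_add flip: e)
  have "C' - A' = (B' - A') + (C' - B')" "D' - B' = (C' - B') + (D' - C')" by simp_all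
  then have "C' - A' = \<mu> *\<^sub>R Lin (of_real k1 * x1 + of_real k2 * x2)"
    and "D' - B' = \<mu> *\<^sub>R Lin (of_real k2 * x2 + of_real k3 * x3)"
    unfolding edges e by (simp_all add: Lin_add Lin_scale scaleR_add_right)
  then have "C' - A' = (\<mu> * (- Re Z / (cmod (x2 + x3))^2)) *\<^sub>R (D - B)"
    "D' - B' = (\<mu> * (- Re Z / (cmod (x1 + x2))^2)) *\<^sub>R (C - A)"
    unfolding dual_diagonal1 dual_diagonal2 diag Lin_scale by simp_all
  then show ?thesis unfolding dual_quads_def parallel_def edges by blast
qed

lemma christoffel_dual_nondeg:
  assumes chr: "christoffel_dual_quad \<mu> A B C D A' B' C' D'" and mu: "\<mu> \<noteq> 0"
  shows "nondeg_planar_quad A' B' C' D'"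
proof -
  obtain U V x1 x2 x3 x4 where frame: "orthonormal_frame U V"
    and e: "B - A = orthonormal_frame.Lin U V x1" "C - B = orthonormal_frame.Lin U V x2"
      "D - C = orthonormal_frame.Lin U V x3" "A - D = orthonormal_frame.Lin U V x4"
    and cq: "real_cr_quad x1 x2 x3 x4 (cross_ratio A B C D)"
    by (rule quad_coordinates[OF nd cc])
  interpret orthonormal_frame U V by (rule frame)
  interpret real_cr_quad x1 x2 x3 x4 "cross_ratio A B C D" by (rule cq)
  define W1 W2 W3 where "W1 = of_real (\<mu> * k1) * x1" and "W2 = of_real (\<mu> * k2) * x2"
    and "W3 = of_real (\<mu> * k3) * x3"
  have edges: "B' - A' = Lin W1" "C' - B' = Lin W2" "D' - C' = Lin W3"
    using chr inversion_weights[of "B - A" "C - B" "D - C" "A - D" \<mu>]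
    unfolding christoffel_dual_quad_def W1_def W2_def W3_def
    by (simp_all add: e norm_Lin Lin_scale del: of_real_mult)
  have "nondeg_planar_quad (emb A' 0) (emb A' W1) (emb A' (W1 + W2)) (emb A' (W1 + W2 + W3))"
    using dual_nondeg[OF mu] unfolding nondeg_emb W1_def W2_def W3_def .
  moreover have "emb A' 0 = A'" "emb A' W1 = B'" "emb A' (W1 + W2) = C'" "emb A' (W1 + W2 + W3) = D'"
    using edges by (simp_all add: emb_eq Lin_add Lin_zero algebra_simps flip: edges)
  ultimately show ?thesis by simp
qed

end

lemma shift_invariant_const: "(\<And>n::int. D (n + 1) = D n) \<Longrightarrow> D n = D 0"
proof -
  assume h: "\<And>n::int. D (n + 1) = D n"
  show ?thesis
  proof (induct n rule: int_induct[where k = 0])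
    case base then show ?case by simp
  next
    case (step1 i) then show ?case using h by simp
  next
    case (step2 i) then show ?case using h[of "i - 1"] by simp
  qed
qed

lemma int_antiderivative: "\<exists>F::int \<Rightarrow> 'a::ab_group_add. F 0 = 0 \<and> (\<forall>k. F (k + 1) - F k = h k)"
proof -
  define F where "F k = (if 0 \<le> k then (\<Sum>i<nat k. h (int i)) else - (\<Sum>i<nat (-k). h (- int i - 1)))" for k
  have "F (k + 1) - F k = h k" for k
  proof (cases "0 \<le> k")
    case True
    have "nat (k + 1) = Suc (nat k)" using True by simp
    then show ?thesis using True by (simp add: F_def)
  next
    case False
    show ?thesis
    proof (cases "k = -1")
      case True then show ?thesis by (simp add: F_def)
    next
      case False2: False
      have "nat (-k) = Suc (nat (- (k + 1)))" using False False2 by simp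
      moreover have "- int (nat (- (k + 1))) - 1 = k" using False by simp
      ultimately show ?thesis using False False2 by (simp add: F_def)
    qed
  qed
  moreover have "F 0 = 0" by (simp add: F_def)
  ultimately show ?thesis by blast
qed

lemma sh_sh [simp]: "sh a b (sh c d u) = sh (a + c) (b + d) u" by (simp add: sh_def)
lemma sh_00 [simp]: "sh 0 0 u = u" by (simp add: sh_def)

lemma closed_form_exact:
  fixes H W :: "int \<times> int \<Rightarrow> 'a::ab_group_add"
  assumes comp: "\<And>u. H u + W (sh 1 0 u) = W u + H (sh 0 1 u)"
  shows "\<exists>g. \<forall>u. g (sh 1 0 u) - g u = H u \<and> g (sh 0 1 u) - g u = W u"
proof -
  obtain G where G: "\<forall>k. G (k + 1) - G k = H (k, 0)" using int_antiderivative[of "\<lambda>k. H (k, 0)"] by blast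
  have "\<forall>m. \<exists>F. F 0 = 0 \<and> (\<forall>k. F (k + 1) - F k = W (m, k))"
  proof
    fix m show "\<exists>F. F 0 = 0 \<and> (\<forall>k. F (k + 1) - F k = W (m, k))" using int_antiderivative[of "\<lambda>k. W (m, k)"] by blast
  qed
  from choice[OF this] obtain F where F_spec: "\<forall>m. F m 0 = 0 \<and> (\<forall>k. F m (k + 1) - F m k = W (m, k))"
    by blast
  have F: "\<And>m. F m 0 = 0" "\<And>m k. F m (k + 1) - F m k = W (m, k)" using F_spec by auto
  \<comment> \<open>\<open>g\<close> integrates \<open>H\<close> along the row \<open>n = 0\<close> and \<open>W\<close> along every column;
    closedness makes the defect of \<open>g\<close> against \<open>H\<close> independent of the row.\<close>
  define g where "g u = G (fst u) + F (fst u) (snd u)" for u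
  have vert: "g (sh 0 1 u) - g u = W u" for u
    using F(2)[of "fst u" "snd u"] by (simp add: g_def sh_def)
  have hor: "g (sh 1 0 (m, n)) - g (m, n) = H (m, n)" for m n
  proof -
    define defect where "defect n = g (m + 1, n) - g (m, n) - H (m, n)" for n
    have "defect (n + 1) = defect n" for n
    proof -
      have c: "H (m, n) + W (m + 1, n) = W (m, n) + H (m, n + 1)" using comp[of "(m, n)"] by (simp add: sh_def)
      have "defect (n + 1) - defect n = (F (m + 1) (n + 1) - F (m + 1) n) - (F m (n + 1) - F m n) - H (m, n + 1) + H (m, n)"
        by (simp add: defect_def g_def algebra_simps)
      also have "\<dots> = W (m + 1, n) - W (m, n) - H (m, n + 1) + H (m, n)" using F(2)[of "m + 1" n] F(2)[of m n] by simp
      also have "\<dots> = (H (m, n) + W (m + 1, n)) - (W (m, n) + H (m, n + 1))" by (simp add: algebra_simps)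
      also have "\<dots> = 0" using c by simp
      finally show ?thesis by simp
    qed
    then have "defect n = defect 0" by (rule shift_invariant_const)
    also have "defect 0 = 0" using G[rule_format, of m] F(1)[of m] F(1)[of "m+1"] by (simp add: defect_def g_def)
    finally show ?thesis by (simp add: defect_def sh_def)
  qed
  show ?thesis
  proof (intro exI allI)
    fix u :: "int \<times> int"
    obtain m n where u: "u = (m, n)" by (cases u)
    show "g (sh 1 0 u) - g u = H u \<and> g (sh 0 1 u) - g u = W u" using hor vert unfolding u by simp
  qed
qed

lemma circular_net_quad:
  assumes "circular_net f"
  shows "nondeg_planar_quad (f u) (f (sh 1 0 u)) (f (sh 1 1 u)) (f (sh 0 1 u))"
    and "concircular (f u) (f (sh 1 0 u)) (f (sh 1 1 u)) (f (sh 0 1 u))"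
  using assms unfolding circular_net_def Q_net_def by blast+

lemma qfun_nonzero: "circular_net f \<Longrightarrow> qfun f u \<noteq> 0"
  unfolding qfun_def by (rule cross_ratio_nonzero[OF circular_net_quad])

definition christoffel_net :: "('a::euclidean_space) net2 \<Rightarrow> 'a net2 \<Rightarrow> (int \<times> int \<Rightarrow> real) \<Rightarrow> bool" where
  "christoffel_net f g \<mu> \<longleftrightarrow> (\<forall>u. christoffel_dual_quad (\<mu> u)
     (f u) (f (sh 1 0 u)) (f (sh 1 1 u)) (f (sh 0 1 u)) (g u) (g (sh 1 0 u)) (g (sh 1 1 u)) (g (sh 0 1 u)))"

lemma christoffel_net_iff: "christoffel_net f g \<mu> \<longleftrightarrow> (\<forall>u.
    g (sh 1 0 u) - g u = \<mu> u *\<^sub>R inversion (f (sh 1 0 u) - f u) \<and>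
    g (sh 1 1 u) - g (sh 1 0 u) = (\<mu> u / qfun f u) *\<^sub>R inversion (f (sh 1 1 u) - f (sh 1 0 u)) \<and>
    g (sh 0 1 u) - g (sh 1 1 u) = \<mu> u *\<^sub>R inversion (f (sh 0 1 u) - f (sh 1 1 u)) \<and>
    g u - g (sh 0 1 u) = (\<mu> u / qfun f u) *\<^sub>R inversion (f u - f (sh 0 1 u)))"
  by (simp add: christoffel_net_def christoffel_dual_quad_def qfun_def)

lemma christoffel_netD:
  assumes "christoffel_net f g \<mu>"
  shows "g (sh 1 0 u) - g u = \<mu> u *\<^sub>R inversion (f (sh 1 0 u) - f u)"
    and "g (sh 1 1 u) - g (sh 1 0 u) = (\<mu> u / qfun f u) *\<^sub>R inversion (f (sh 1 1 u) - f (sh 1 0 u))"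
    and "g (sh 0 1 u) - g (sh 1 1 u) = \<mu> u *\<^sub>R inversion (f (sh 0 1 u) - f (sh 1 1 u))"
    and "g u - g (sh 0 1 u) = (\<mu> u / qfun f u) *\<^sub>R inversion (f u - f (sh 0 1 u))"
  using assms unfolding christoffel_net_iff by blast+

lemma koenigs_dual_is_christoffel:
  assumes circ: "circular_net f" and Qg: "Q_net g"
    and dual: "\<And>u. dual_quads (f u) (f (sh 1 0 u)) (f (sh 1 1 u)) (f (sh 0 1 u))
                              (g u) (g (sh 1 0 u)) (g (sh 1 1 u)) (g (sh 0 1 u))"
  obtains \<mu> where "christoffel_net f g \<mu>" and "\<And>u. \<mu> u \<noteq> 0"
proof -
  have "\<forall>u. \<exists>m. christoffel_dual_quad m
     (f u) (f (sh 1 0 u)) (f (sh 1 1 u)) (f (sh 0 1 u)) (g u) (g (sh 1 0 u)) (g (sh 1 1 u)) (g (sh 0 1 u))"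
    using dual_quads_christoffel[OF circular_net_quad[OF circ] dual] by blast
  then obtain \<mu> where chr: "christoffel_net f g \<mu>"
    unfolding christoffel_net_def by (rule choice[THEN exE])
  have "\<mu> u \<noteq> 0" for u
  proof
    assume "\<mu> u = 0"
    then have "g (sh 1 0 u) = g u" using christoffel_netD(1)[OF chr, of u] by simp
    moreover have "distinct [g u, g (sh 1 0 u), g (sh 1 1 u), g (sh 0 1 u)]"
      using Qg unfolding Q_net_def nondeg_planar_quad_def by blast
    ultimately show False by simp
  qed
  with chr show ?thesis using that by blast
qed

text \<open>Compatibility along a shared edge in the first direction: \<open>\<mu>\<close> does not change
  in the second direction.\<close>

lemma christoffel_multiplier_vertical:
  assumes circ: "circular_net f" and chr: "christoffel_net f g \<mu>"
  shows "\<mu> (sh 0 (-1) u) = \<mu> u"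
proof -
  define e where "e = f (sh 1 0 u) - f u"
  have "e \<noteq> 0"
    using circular_net_quad(1)[OF circ, of u] unfolding e_def nondeg_planar_quad_def by auto
  then have inv_e: "inversion e \<noteq> 0" by (simp add: inversion_eq_0)
  have "f u - f (sh 1 0 u) = - e" by (simp add: e_def)
  then have "g u - g (sh 1 0 u) = - (\<mu> (sh 0 (-1) u) *\<^sub>R inversion e)"
    using christoffel_netD(3)[OF chr, of "sh 0 (-1) u"] by (simp add: inversion_minus)
  then have "\<mu> (sh 0 (-1) u) *\<^sub>R inversion e = g (sh 1 0 u) - g u"
    by (metis minus_diff_eq minus_minus)
  also have "\<dots> = \<mu> u *\<^sub>R inversion e"
    using christoffel_netD(1)[OF chr] by (simp add: e_def)
  finally have "\<mu> u *\<^sub>R inversion e = \<mu> (sh 0 (-1) u) *\<^sub>R inversion e" ..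
  then show ?thesis using inv_e by simp
qed

text \<open>Compatibility along a shared edge in the second direction: \<open>\<mu>/q\<close> does not change
  in the first direction.\<close>

lemma christoffel_multiplier_horizontal:
  assumes circ: "circular_net f" and chr: "christoffel_net f g \<mu>"
  shows "\<mu> (sh (-1) 0 u) / qfun f (sh (-1) 0 u) = \<mu> u / qfun f u"
proof -
  define e where "e = f (sh 0 1 u) - f u"
  have "e \<noteq> 0"
    using circular_net_quad(1)[OF circ, of u] unfolding e_def nondeg_planar_quad_def by auto
  then have inv_e: "inversion e \<noteq> 0" by (simp add: inversion_eq_0)
  have "f u - f (sh 0 1 u) = - e" by (simp add: e_def)
  then have "g u - g (sh 0 1 u) = - ((\<mu> u / qfun f u) *\<^sub>R inversion e)"
    using christoffel_netD(4)[OF chr, of u] by (simp add: inversion_minus)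
  then have "(\<mu> u / qfun f u) *\<^sub>R inversion e = g (sh 0 1 u) - g u"
    by (metis minus_diff_eq minus_minus)
  also have "\<dots> = (\<mu> (sh (-1) 0 u) / qfun f (sh (-1) 0 u)) *\<^sub>R inversion e"
    using christoffel_netD(2)[OF chr, of "sh (-1) 0 u"] by (simp add: e_def)
  finally have "(\<mu> u / qfun f u) *\<^sub>R inversion e = (\<mu> (sh (-1) 0 u) / qfun f (sh (-1) 0 u)) *\<^sub>R inversion e" .
  then show ?thesis using inv_e by simp
qed

lemma multiplier_relation:
  fixes \<mu> q :: "int \<times> int \<Rightarrow> real"
  assumes \<mu>_nz: "\<And>u. \<mu> u \<noteq> 0" and q_nz: "\<And>u. q u \<noteq> 0"
    and vert: "\<And>u. \<mu> (sh 0 (-1) u) = \<mu> u"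
    and hor: "\<And>u. \<mu> (sh (-1) 0 u) / q (sh (-1) 0 u) = \<mu> u / q u"
  shows "q u * q (sh (-1) (-1) u) = q (sh (-1) 0 u) * q (sh 0 (-1) u)"
proof -
  have "\<mu> (sh (-1) (-1) u) = \<mu> (sh (-1) 0 u)" using vert[of "sh (-1) 0 u"] by simp
  then have "\<mu> (sh (-1) 0 u) / q (sh (-1) (-1) u) = \<mu> u / q (sh 0 (-1) u)"
    using hor[of "sh 0 (-1) u"] vert[of u] by simp
  then have "\<mu> (sh (-1) 0 u) * q (sh 0 (-1) u) = \<mu> u * q (sh (-1) (-1) u)"
    and "\<mu> (sh (-1) 0 u) * q u = \<mu> u * q (sh (-1) 0 u)"
    using hor[of u] q_nz by (simp_all add: field_simps)
  then have "\<mu> u * (q u * q (sh (-1) (-1) u)) = \<mu> u * (q (sh (-1) 0 u) * q (sh 0 (-1) u))"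
    by algebra
  then show ?thesis using \<mu>_nz[of u] by simp
qed

text \<open>Conversely, the relation allows a compatible multiplier: \<open>\<mu>(m, n) = q(m, 0)\<close>, since
  the relation says exactly that \<open>q(m, n) / q(m - 1, n)\<close> does not depend on \<open>n\<close>.\<close>

lemma multiplier_exists:
  fixes q :: "int \<times> int \<Rightarrow> real"
  assumes q_nz: "\<And>u. q u \<noteq> 0"
    and rel: "\<And>u. q u * q (sh (-1) (-1) u) = q (sh (-1) 0 u) * q (sh 0 (-1) u)"
  obtains \<mu> where "\<And>u. \<mu> u \<noteq> 0" and "\<And>u. \<mu> (sh 0 (-1) u) = \<mu> u"
    and "\<And>u. \<mu> (sh (-1) 0 u) / q (sh (-1) 0 u) = \<mu> u / q u"
proof -
  define \<mu> :: "int \<times> int \<Rightarrow> real" where "\<mu> u = q (fst u, 0)" for u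
  have ratio: "q (m, n) / q (m - 1, n) = q (m, 0) / q (m - 1, 0)" for m n
  proof -
    have "q (m, k + 1) / q (m - 1, k + 1) = q (m, k) / q (m - 1, k)" for k
      using rel[of "(m, k + 1)"] q_nz by (simp add: sh_def field_simps)
    then show ?thesis by (rule shift_invariant_const)
  qed
  have "\<mu> u \<noteq> 0" "\<mu> (sh 0 (-1) u) = \<mu> u" for u
    using q_nz by (simp_all add: \<mu>_def sh_def)
  moreover have "\<mu> (sh (-1) 0 u) / q (sh (-1) 0 u) = \<mu> u / q u" for u
    using ratio[of "fst u" "snd u"] q_nz by (simp add: \<mu>_def sh_def field_simps)
  ultimately show ?thesis by (rule that)
qed

text \<open>A compatible multiplier turns the Christoffel edges into a closed 1-form, whose
  integral is a Christoffel dual net.\<close>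

lemma christoffel_net_exists:
  assumes circ: "circular_net f"
    and vert: "\<And>u. \<mu> (sh 0 (-1) u) = \<mu> u"
    and hor: "\<And>u. \<mu> (sh (-1) 0 u) / qfun f (sh (-1) 0 u) = \<mu> u / qfun f u"
  obtains g where "christoffel_net f g \<mu>"
proof -
  define H where "H u = \<mu> u *\<^sub>R inversion (f (sh 1 0 u) - f u)" for u
  define W where "W u = (\<mu> u / qfun f u) *\<^sub>R inversion (f (sh 0 1 u) - f u)" for u
  have H_up: "H (sh 0 1 u) = - (\<mu> u *\<^sub>R inversion (f (sh 0 1 u) - f (sh 1 1 u)))" for u
    using vert[of "sh 0 1 u"] by (simp add: H_def inversion_swap[of "f (sh 1 1 u)"])
  have W_right: "W (sh 1 0 u) = (\<mu> u / qfun f u) *\<^sub>R inversion (f (sh 1 1 u) - f (sh 1 0 u))" for u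
    using hor[of "sh 1 0 u"] by (simp add: W_def)
  have W_neg: "W u = - ((\<mu> u / qfun f u) *\<^sub>R inversion (f u - f (sh 0 1 u)))" for u
    by (simp add: W_def inversion_swap[of "f (sh 0 1 u)"])
  have closed: "H u + W (sh 1 0 u) = W u + H (sh 0 1 u)" for u
  proof -
    have q: "cross_ratio (f u) (f (sh 1 0 u)) (f (sh 1 1 u)) (f (sh 0 1 u)) = qfun f u"
      by (simp add: qfun_def)
    have "H u + W (sh 1 0 u) - (W u + H (sh 0 1 u)) =
        \<mu> u *\<^sub>R inversion (f (sh 1 0 u) - f u) + (\<mu> u / qfun f u) *\<^sub>R inversion (f (sh 1 1 u) - f (sh 1 0 u))
        + \<mu> u *\<^sub>R inversion (f (sh 0 1 u) - f (sh 1 1 u)) + (\<mu> u / qfun f u) *\<^sub>R inversion (f u - f (sh 0 1 u))"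
      unfolding W_right unfolding H_up W_neg by (simp add: H_def algebra_simps)
    also have "\<dots> = 0"
      using christoffel_closing[OF circular_net_quad[OF circ, of u], of "\<mu> u"] unfolding q .
    finally show ?thesis by simp
  qed
  obtain g where g: "\<And>u. g (sh 1 0 u) - g u = H u" "\<And>u. g (sh 0 1 u) - g u = W u"
    using closed_form_exact[of H W, OF closed] by blast
  have "g (sh 1 1 u) - g (sh 1 0 u) = W (sh 1 0 u)" "g (sh 0 1 u) - g (sh 1 1 u) = - H (sh 0 1 u)"
    "g u - g (sh 0 1 u) = - W u" for u
    using g(2)[of "sh 1 0 u"] g(1)[of "sh 0 1 u"] g(2)[of u] by (simp_all add: algebra_simps)
  then have "christoffel_net f g \<mu>"
    unfolding christoffel_net_iff using g(1) W_right H_up W_neg by (simp add: H_def)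
  then show ?thesis by (rule that)
qed

lemma christoffel_net_isothermic:
  assumes circ: "circular_net f" and chr: "christoffel_net f g \<mu>" and nz: "\<And>u. \<mu> u \<noteq> 0"
  shows "isothermic_net f"
proof -
  have quad: "christoffel_dual_quad (\<mu> u) (f u) (f (sh 1 0 u)) (f (sh 1 1 u)) (f (sh 0 1 u))
      (g u) (g (sh 1 0 u)) (g (sh 1 1 u)) (g (sh 0 1 u))" for u
    using chr unfolding christoffel_net_def by blast
  have "Q_net g"
    unfolding Q_net_def using christoffel_dual_nondeg[OF circular_net_quad[OF circ] quad nz] by blast
  moreover have "dual_quads (f u) (f (sh 1 0 u)) (f (sh 1 1 u)) (f (sh 0 1 u))
      (g u) (g (sh 1 0 u)) (g (sh 1 1 u)) (g (sh 0 1 u))" for u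
    using christoffel_dual_quads[OF circular_net_quad[OF circ] quad] .
  ultimately show ?thesis
    using circ unfolding isothermic_net_def Koenigs_net_def circular_net_def by blast
qed

theorem mainTheorem12:
  fixes f :: "int \<times> int \<Rightarrow> 'a::euclidean_space"
  assumes "circular_net f"
  shows "isothermic_net f \<longleftrightarrow>
    (\<forall>u. qfun f u * qfun f (sh (-1) (-1) u) = qfun f (sh (-1) 0 u) * qfun f (sh 0 (-1) u))"
proof
  assume "isothermic_net f"
  then obtain g where Qg: "Q_net g" and dual: "\<And>u. dual_quads (f u) (f (sh 1 0 u)) (f (sh 1 1 u)) (f (sh 0 1 u))
      (g u) (g (sh 1 0 u)) (g (sh 1 1 u)) (g (sh 0 1 u))"
    unfolding isothermic_net_def Koenigs_net_def by blast
  obtain \<mu> where chr: "christoffel_net f g \<mu>" and nz: "\<And>u. \<mu> u \<noteq> 0"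
    using koenigs_dual_is_christoffel[OF assms Qg dual] by blast
  show "\<forall>u. qfun f u * qfun f (sh (-1) (-1) u) = qfun f (sh (-1) 0 u) * qfun f (sh 0 (-1) u)"
    using multiplier_relation[of \<mu> "qfun f", OF nz qfun_nonzero[OF assms]
        christoffel_multiplier_vertical[OF assms chr] christoffel_multiplier_horizontal[OF assms chr]]
    by blast
next
  assume "\<forall>u. qfun f u * qfun f (sh (-1) (-1) u) = qfun f (sh (-1) 0 u) * qfun f (sh 0 (-1) u)"
  then obtain \<mu> where nz: "\<And>u. \<mu> u \<noteq> 0" and "\<And>u. \<mu> (sh 0 (-1) u) = \<mu> u"
    and "\<And>u. \<mu> (sh (-1) 0 u) / qfun f (sh (-1) 0 u) = \<mu> u / qfun f u"
    using multiplier_exists[of "qfun f"] qfun_nonzero[OF assms] by metis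
  then obtain g where "christoffel_net f g \<mu>"
    using christoffel_net_exists[OF assms] by metis
  then show "isothermic_net f" using nz by (rule christoffel_net_isothermic[OF assms])
qed

end
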